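(* Let $X$ be a compact metric space and $f\colon X\to X$ continuous. Then $(X,f)$ has property $P_e$ if and only if $(X,f)$ has $\gamma$-restricted two-sided orbital limit shadowing.
   Context: A full trajectory is a sequence $\langle x_i\rangle_{i\in\mathbb Z}$ in $X$ with $f(x_i)=x_{i+1}$ for all $i\in\mathbb Z$. For a two-sided sequence $\langle x_i\rangle_{i\in\mathbb Z}$ in $X$, $\omega(\langle x_i\rangle)=\bigcap_{M\in\mathbb N}\overline{\{x_n: n>M\}}$ and $\alpha(\langle x_i\rangle)=\bigcap_{M\in\mathbb N}\overline{\{x_n: n<-M\}}$. A set $A\subseteq X$ is internally chain transitive if for all $a,b\in A$ and every $\delta>0$ there is a finite sequence $x_0=a,x_1,\dots,x_N=b$ in $A$ with $N\ge1$ and $d(f(x_i),x_{i+1})<\delta$ for all $i<N$; $ICT_f$ denotes the set of nonempty closed internally chain transitive subsets of $X$. Property $P_e$: for every $A\in ICT_f$ there is a full trajectory $\langle x_i\rangle_{i\in\mathbb Z}$ with $\alpha(\langle x_i\rangle)=\omega(\langle x_i\rangle)=A$. A two-sided asymptotic pseudo-orbit is a sequence $\langle x_i\rangle_{i\in\mathbb Z}$ with $d(f(x_i),x_{i+1})\to0$ as $i\to\pm\infty$. $(X,f)$ has $\gamma$-restricted two-sided orbital limit shadowing if for every two-sided asymptotic pseudo-orbit $\langle x_i\rangle_{i\in\mathbb Z}$ with $\alpha(\langle x_i\rangle)=\omega(\langle x_i\rangle)$ there is a full trajectory $\langle z_i\rangle_{i\in\mathbb Z}$ with $\alpha(\langle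 z_i\rangle)=\alpha(\langle x_i\rangle)$ and $\omega(\langle z_i\rangle)=\omega(\langle x_i\rangle)$. *)

theory Defs
  imports "HOL-Analysis.Analysis"
begin

text \<open>The phase space X is modelled as a set S in a metric space type; f maps S into S.\<close>

definition full_trajectory :: "'a set \<Rightarrow> ('a \<Rightarrow> 'a) \<Rightarrow> (int \<Rightarrow> 'a) \<Rightarrow> bool" where
  "full_trajectory S f x \<longleftrightarrow> (\<forall>i. x i \<in> S) \<and> (\<forall>i. f (x i) = x (i + 1))"

definition omega_set :: "(int \<Rightarrow> 'a::metric_space) \<Rightarrow> 'a set" where
  "omega_set x = (\<Inter>M::nat. closure {x n | n. n > int M})"

definition alpha_set :: "(int \<Rightarrow> 'a::metric_space) \<Rightarrow> 'a set" where
  "alpha_set x = (\<Inter>M::nat. closure {x n | n. n < - int M})"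

definition internally_chain_transitive :: "('a::metric_space \<Rightarrow> 'a) \<Rightarrow> 'a set \<Rightarrow> bool" where
  "internally_chain_transitive f A \<longleftrightarrow>
     (\<forall>a\<in>A. \<forall>b\<in>A. \<forall>\<delta>>0. \<exists>N::nat. \<exists>y::nat \<Rightarrow> 'a. N \<ge> 1 \<and> y 0 = a \<and> y N = b \<and>
        (\<forall>i\<le>N. y i \<in> A) \<and> (\<forall>i<N. dist (f (y i)) (y (Suc i)) < \<delta>))"

definition ICT :: "'a set \<Rightarrow> ('a::metric_space \<Rightarrow> 'a) \<Rightarrow> 'a set set" where
  "ICT S f = {A. A \<subseteq> S \<and> A \<noteq> {} \<and> closed A \<and> internally_chain_transitive f A}"

definition property_Pe :: "'a set \<Rightarrow> ('a::metric_space \<Rightarrow> 'a) \<Rightarrow> bool" where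
  "property_Pe S f \<longleftrightarrow> (\<forall>A\<in>ICT S f. \<exists>x. full_trajectory S f x \<and> alpha_set x = A \<and> omega_set x = A)"

definition two_sided_asymptotic_pseudo_orbit :: "'a set \<Rightarrow> ('a::metric_space \<Rightarrow> 'a) \<Rightarrow> (int \<Rightarrow> 'a) \<Rightarrow> bool" where
  "two_sided_asymptotic_pseudo_orbit S f x \<longleftrightarrow> (\<forall>i. x i \<in> S) \<and>
     ((\<lambda>i. dist (f (x i)) (x (i + 1))) \<longlongrightarrow> 0) at_top \<and>
     ((\<lambda>i. dist (f (x i)) (x (i + 1))) \<longlongrightarrow> 0) at_bot"

definition gamma_restricted_two_sided_orbital_limit_shadowing :: "'a set \<Rightarrow> ('a::metric_space \<Rightarrow> 'a) \<Rightarrow> bool" where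
  "gamma_restricted_two_sided_orbital_limit_shadowing S f \<longleftrightarrow>
     (\<forall>x. two_sided_asymptotic_pseudo_orbit S f x \<and> alpha_set x = omega_set x \<longrightarrow>
        (\<exists>z. full_trajectory S f z \<and> alpha_set z = alpha_set x \<and> omega_set z = omega_set x))"

end

theory Submission
  imports Defs
begin

(* In a compact space the internally chain transitive sets are exactly the limit sets of
   asymptotic pseudo-orbits.  Points of an asymptotic pseudo-orbit eventually lie close to its
   omega-limit set, so replacing them by nearby limit points turns an orbit segment into a
   delta-chain inside the limit set (uniform continuity of f); hence the limit set of a
   two-sided asymptotic pseudo-orbit with alpha = omega is an ICT set, and P_e supplies the
   shadowing trajectory.  Conversely, given an ICT set A, concatenate delta_k-chains in A with
   delta_k -> 0 through a sequence that returns to every part of A infinitely often: forward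
   chains for positive times, reversed chains for negative times.  The result is a two-sided
   asymptotic pseudo-orbit with alpha = omega = A, and the shadowing trajectory is the one
   required by P_e. *)

section \<open>Limit sets of asymptotic pseudo-orbits\<close>

lemma mem_omega_set_iff:
  "y \<in> omega_set x \<longleftrightarrow> (\<forall>\<epsilon>>0. \<forall>M. \<exists>n>M. dist (x n) y < \<epsilon>)"
proof
  assume y: "y \<in> omega_set x"
  show "\<forall>\<epsilon>>0. \<forall>M. \<exists>n>M. dist (x n) y < \<epsilon>"
  proof (intro allI impI)
    fix \<epsilon> :: real and M :: int
    assume "\<epsilon> > 0"
    moreover have "y \<in> closure {x n | n. n > int (nat M)}"
      using y unfolding omega_set_def by blast
    ultimately obtain n where "n > int (nat M)" "dist (x n) y < \<epsilon>"
      unfolding closure_approachable by blast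
    then show "\<exists>n>M. dist (x n) y < \<epsilon>"
      by (intro exI[of _ n]) (auto split: if_splits)
  qed
next
  assume near: "\<forall>\<epsilon>>0. \<forall>M. \<exists>n>M. dist (x n) y < \<epsilon>"
  have "y \<in> closure {x n | n. n > int M}" for M :: nat
    unfolding closure_approachable
  proof (intro allI impI)
    fix \<epsilon> :: real
    assume "\<epsilon> > 0"
    then obtain n where "n > int M" "dist (x n) y < \<epsilon>"
      using near by blast
    then show "\<exists>z\<in>{x n | n. n > int M}. dist z y < \<epsilon>"
      by blast
  qed
  then show "y \<in> omega_set x"
    unfolding omega_set_def by blast
qed

lemma alpha_set_eq_omega_set_reflect: "alpha_set x = omega_set (\<lambda>i. x (- i))"
proof -
  have "{x n | n. n < - int M} = {x (- n) | n. n > int M}" for M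
  proof (intro set_eqI iffI)
    fix z assume "z \<in> {x n | n. n < - int M}"
    then obtain n where "n < - int M" "z = x n"
      by blast
    then show "z \<in> {x (- n) | n. n > int M}"
      by (intro CollectI exI[of _ "- n"]) auto
  qed auto
  then show ?thesis
    unfolding alpha_set_def omega_set_def by simp
qed

lemma closed_omega_set: "closed (omega_set x)"
  unfolding omega_set_def by blast

lemma omega_set_subset:
  assumes "closed S" "\<And>i. x i \<in> S"
  shows "omega_set x \<subseteq> S"
proof -
  have "closure {x n | n. n > int 0} \<subseteq> S"
    using assms by (intro closure_minimal) auto
  then show ?thesis
    unfolding omega_set_def by blast
qed

lemma omega_set_eqI:
  assumes "closed A" "\<And>i. x i \<in> A" "\<And>b \<epsilon> M. b \<in> A \<Longrightarrow> \<epsilon> > 0 \<Longrightarrow> \<exists>n>M. dist (x n) b < \<epsilon>"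
  shows "omega_set x = A"
proof
  show "omega_set x \<subseteq> A"
    using assms(1,2) by (rule omega_set_subset)
  show "A \<subseteq> omega_set x"
    using assms(3) by (auto simp: mem_omega_set_iff)
qed

lemma eventually_notin_closed_disjoint_omega_set:
  assumes "compact S" "\<And>i. x i \<in> S" "closed C" "omega_set x \<inter> C = {}"
  shows "eventually (\<lambda>n. x n \<notin> C) at_top"
proof (rule ccontr)
  define K where "K M = closure {x n | n. n > int M} \<inter> C" for M :: nat
  assume "\<not> eventually (\<lambda>n. x n \<notin> C) at_top"
  then have frequently: "\<exists>n>N. x n \<in> C" for N
    unfolding eventually_at_top_dense by blast
  have K_nonempty: "K M \<noteq> {}" for M
  proof -
    obtain n where "n > int M" "x n \<in> C"
      using frequently[of "int M"] by blast
    then have "x n \<in> closure {x m | m. m > int M}"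
      by (blast intro: closure_subset[THEN subsetD])
    with \<open>x n \<in> C\<close> show ?thesis
      unfolding K_def by blast
  qed
  have K_S: "K M \<subseteq> S" for M
  proof -
    have "closure {x n | n. n > int M} \<subseteq> S"
      using assms(1,2) by (intro closure_minimal compact_imp_closed) auto
    then show ?thesis
      unfolding K_def by blast
  qed
  have K_antimono: "K M' \<subseteq> K M" if "M \<le> M'" for M M'
    unfolding K_def using that by (intro Int_mono closure_mono) auto
  have "S \<inter> (\<Inter>M\<in>UNIV. K M) \<noteq> {}"
  proof (rule compact_imp_fip_image[OF assms(1)])
    show "closed (K M)" for M
      unfolding K_def using assms(3) by (intro closed_Int closed_closure)
    fix I :: "nat set" assume "finite I"
    then obtain M where "I \<subseteq> {..<M}"
      using finite_nat_bounded by blast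
    then have "K M \<subseteq> K i" if "i \<in> I" for i
      using that by (intro K_antimono) auto
    then have "K M \<subseteq> S \<inter> (\<Inter>i\<in>I. K i)"
      using K_S by blast
    then show "S \<inter> (\<Inter>i\<in>I. K i) \<noteq> {}"
      using K_nonempty by blast
  qed
  moreover have "(\<Inter>M. K M) \<subseteq> omega_set x \<inter> C"
    unfolding K_def omega_set_def by blast
  ultimately show False
    using assms(4) by blast
qed

lemma omega_set_nonempty:
  assumes "compact S" "\<And>i. x i \<in> S"
  shows "omega_set x \<noteq> {}"
  using eventually_notin_closed_disjoint_omega_set[OF assms, of UNIV] by auto

lemma eventually_near_omega_set:
  assumes "compact S" "\<And>i. x i \<in> S" "\<eta> > 0"
  shows "eventually (\<lambda>n. \<exists>y\<in>omega_set x. dist (x n) y < \<eta>) at_top"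
proof -
  have "eventually (\<lambda>n. x n \<notin> - (\<Union>y\<in>omega_set x. ball y \<eta>)) at_top"
    using assms by (intro eventually_notin_closed_disjoint_omega_set) force+
  then show ?thesis
    by eventually_elim (auto simp: dist_commute)
qed

definition delta_chain :: "('a \<Rightarrow> 'a \<Rightarrow> real) \<Rightarrow> 'a set \<Rightarrow> real \<Rightarrow> 'a \<Rightarrow> 'a \<Rightarrow> bool" where
  "delta_chain E A \<delta> a b \<longleftrightarrow> (\<exists>N c. N \<ge> 1 \<and> c 0 = a \<and> c N = b \<and> (\<forall>i\<le>N. c i \<in> A) \<and>
     (\<forall>i<N. E (c i) (c (Suc i)) < \<delta>))"

lemma internally_chain_transitive_iff_delta_chain:
  "internally_chain_transitive f A \<longleftrightarrow>
    (\<forall>a\<in>A. \<forall>b\<in>A. \<forall>\<delta>>0. delta_chain (\<lambda>u v. dist (f u) v) A \<delta> a b)"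
  unfolding internally_chain_transitive_def delta_chain_def by simp

lemma delta_chain_near_pseudo_orbit_segment:
  fixes x :: "int \<Rightarrow> 'a::metric_space"
  assumes "n1 < n2" "a \<in> B" "b \<in> B" "dist (x n1) a < \<eta>" "dist (x n2) b < \<eta>"
    and near: "\<And>n. n1 < n \<Longrightarrow> n < n2 \<Longrightarrow> \<exists>y\<in>B. dist (x n) y < \<eta>"
    and orbit: "\<And>n. n1 \<le> n \<Longrightarrow> n < n2 \<Longrightarrow> dist (f (x n)) (x (n + 1)) < \<eta>"
    and cont: "\<And>n y. n1 \<le> n \<Longrightarrow> n < n2 \<Longrightarrow> y \<in> B \<Longrightarrow> dist (x n) y < \<eta> \<Longrightarrow> dist (f y) (f (x n)) < \<epsilon>"
    and "\<epsilon> + 2 * \<eta> \<le> \<delta>"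
  shows "delta_chain (\<lambda>u v. dist (f u) v) B \<delta> a b"
proof -
  define N where "N = nat (n2 - n1)"
  define y where "y i = (if i = 0 then a else if i = N then b
      else (SOME y. y \<in> B \<and> dist (x (n1 + int i)) y < \<eta>))" for i
  have "N \<ge> 1" "n1 + int N = n2"
    using \<open>n1 < n2\<close> by (auto simp: N_def)
  have y: "y i \<in> B \<and> dist (x (n1 + int i)) (y i) < \<eta>" if "i \<le> N" for i
  proof (cases "i = 0 \<or> i = N")
    case True
    then show ?thesis
      using assms(2-5) \<open>n1 + int N = n2\<close> by (auto simp: y_def)
  next
    case False
    then have "\<exists>y\<in>B. dist (x (n1 + int i)) y < \<eta>"
      using that \<open>n1 + int N = n2\<close> by (intro near) auto
    then have "(SOME y. y \<in> B \<and> dist (x (n1 + int i)) y < \<eta>) \<in> B \<and>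
        dist (x (n1 + int i)) (SOME y. y \<in> B \<and> dist (x (n1 + int i)) y < \<eta>) < \<eta>"
      by (rule someI2_bex) blast
    then show ?thesis
      using False by (simp add: y_def)
  qed
  show ?thesis
    unfolding delta_chain_def
  proof (intro exI[of _ N] exI[of _ y] conjI allI impI)
    fix i assume "i < N"
    let ?u = "x (n1 + int i)" and ?v = "x (n1 + int i + 1)"
    have "dist (f (y i)) (f ?u) < \<epsilon>"
      using y[of i] \<open>i < N\<close> \<open>n1 + int N = n2\<close> by (intro cont) auto
    moreover have "dist (f ?u) ?v < \<eta>"
      using \<open>i < N\<close> \<open>n1 + int N = n2\<close> by (intro orbit) auto
    moreover have "dist ?v (y (Suc i)) < \<eta>"
      using y[of "Suc i"] \<open>i < N\<close> by (simp add: ac_simps)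
    moreover have "dist (f (y i)) (y (Suc i)) \<le> dist (f (y i)) (f ?u) + dist (f ?u) ?v + dist ?v (y (Suc i))"
      using dist_triangle[of "f (y i)" "y (Suc i)" "f ?u"] dist_triangle[of "f ?u" "y (Suc i)" ?v] by linarith
    ultimately show "dist (f (y i)) (y (Suc i)) < \<delta>"
      using \<open>\<epsilon> + 2 * \<eta> \<le> \<delta>\<close> by linarith
  qed (use \<open>N \<ge> 1\<close> y in \<open>auto simp: y_def\<close>)
qed

lemma internally_chain_transitive_omega_set:
  assumes "compact S" "continuous_on S f" "\<And>i. x i \<in> S"
    and "((\<lambda>i. dist (f (x i)) (x (i + 1))) \<longlongrightarrow> 0) at_top"
  shows "internally_chain_transitive f (omega_set x)"
  unfolding internally_chain_transitive_iff_delta_chain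
proof (intro ballI allI impI)
  fix a b and \<delta> :: real
  assume a: "a \<in> omega_set x" and b: "b \<in> omega_set x" and "\<delta> > 0"
  obtain d where "d > 0" and d: "\<And>u v. u \<in> S \<Longrightarrow> v \<in> S \<Longrightarrow> dist u v < d \<Longrightarrow> dist (f u) (f v) < \<delta> / 3"
    using compact_uniformly_continuous[OF assms(2,1)] \<open>\<delta> > 0\<close>
    unfolding uniformly_continuous_on_def by (metis divide_pos_pos zero_less_numeral)
  define \<eta> where "\<eta> = min d (\<delta> / 3)"
  have "\<eta> > 0" "\<eta> \<le> d" "\<eta> \<le> \<delta> / 3"
    using \<open>d > 0\<close> \<open>\<delta> > 0\<close> by (auto simp: \<eta>_def)
  have "eventually (\<lambda>n. dist (f (x n)) (x (n + 1)) < \<eta> \<and> (\<exists>y\<in>omega_set x. dist (x n) y < \<eta>)) at_top"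
    using order_tendstoD(2)[OF assms(4) \<open>\<eta> > 0\<close>] eventually_near_omega_set[OF assms(1,3) \<open>\<eta> > 0\<close>]
    by (rule eventually_conj)
  then obtain n0 where n0: "\<And>n. n \<ge> n0 \<Longrightarrow> dist (f (x n)) (x (n + 1)) < \<eta> \<and> (\<exists>y\<in>omega_set x. dist (x n) y < \<eta>)"
    unfolding eventually_at_top_linorder by blast
  obtain n1 where "n1 > n0" "dist (x n1) a < \<eta>"
    using a \<open>\<eta> > 0\<close> unfolding mem_omega_set_iff by blast
  obtain n2 where "n2 > n1" "dist (x n2) b < \<eta>"
    using b \<open>\<eta> > 0\<close> unfolding mem_omega_set_iff by blast
  have "omega_set x \<subseteq> S"
    using assms(1,3) by (intro omega_set_subset compact_imp_closed)
  show "delta_chain (\<lambda>u v. dist (f u) v) (omega_set x) \<delta> a b"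
  proof (rule delta_chain_near_pseudo_orbit_segment[where \<epsilon> = "\<delta> / 3" and \<eta> = \<eta>])
    show "dist (f y) (f (x n)) < \<delta> / 3" if "y \<in> omega_set x" "dist (x n) y < \<eta>" for n y
      using that \<open>omega_set x \<subseteq> S\<close> assms(3) \<open>\<eta> \<le> d\<close> by (intro d) (auto simp: dist_commute)
  qed (use n0 \<open>n1 > n0\<close> \<open>n2 > n1\<close> a b \<open>dist (x n1) a < \<eta>\<close> \<open>dist (x n2) b < \<eta>\<close> \<open>\<eta> \<le> \<delta> / 3\<close> in auto)
qed

lemma omega_set_in_ICT:
  assumes "compact S" "continuous_on S f" "\<And>i. x i \<in> S"
    and "((\<lambda>i. dist (f (x i)) (x (i + 1))) \<longlongrightarrow> 0) at_top"
  shows "omega_set x \<in> ICT S f"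
proof -
  have "omega_set x \<subseteq> S"
    using assms(1,3) by (intro omega_set_subset compact_imp_closed)
  moreover have "omega_set x \<noteq> {}"
    using assms(1,3) by (rule omega_set_nonempty)
  moreover have "internally_chain_transitive f (omega_set x)"
    using assms by (rule internally_chain_transitive_omega_set)
  ultimately show ?thesis
    unfolding ICT_def using closed_omega_set by blast
qed

lemma property_Pe_imp_shadowing:
  assumes "compact S" "continuous_on S f" "property_Pe S f"
  shows "gamma_restricted_two_sided_orbital_limit_shadowing S f"
  unfolding gamma_restricted_two_sided_orbital_limit_shadowing_def
proof (intro allI impI, elim conjE)
  fix x
  assume "two_sided_asymptotic_pseudo_orbit S f x" "alpha_set x = omega_set x"
  then have "omega_set x \<in> ICT S f"
    unfolding two_sided_asymptotic_pseudo_orbit_def by (intro omega_set_in_ICT[OF assms(1,2)]) auto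
  then obtain z where "full_trajectory S f z" "alpha_set z = omega_set x" "omega_set z = omega_set x"
    using assms(3) unfolding property_Pe_def by blast
  then show "\<exists>z. full_trajectory S f z \<and> alpha_set z = alpha_set x \<and> omega_set z = omega_set x"
    using \<open>alpha_set x = omega_set x\<close> by auto
qed

section \<open>Pseudo-orbits through internally chain transitive sets\<close>

lemma internally_chain_transitive_reverse_delta_chain:
  assumes "internally_chain_transitive f A"
  shows "\<forall>a\<in>A. \<forall>b\<in>A. \<forall>\<delta>>0. delta_chain (\<lambda>u v. dist (f v) u) A \<delta> a b"
proof (intro ballI allI impI)
  fix a b and \<delta> :: real
  assume "a \<in> A" "b \<in> A" "\<delta> > 0"
  then obtain N y where "N \<ge> 1" "y 0 = b" "y N = a" "\<forall>i\<le>N. y i \<in> A"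
    and y: "\<forall>i<N. dist (f (y i)) (y (Suc i)) < \<delta>"
    using assms unfolding internally_chain_transitive_def by blast
  show "delta_chain (\<lambda>u v. dist (f v) u) A \<delta> a b"
    unfolding delta_chain_def
  proof (intro exI[of _ N] exI[of _ "\<lambda>i. y (N - i)"] conjI allI impI)
    fix i assume "i < N"
    then have "N - i = Suc (N - Suc i)"
      by simp
    then show "dist (f (y (N - Suc i))) (y (N - i)) < \<delta>"
      using y \<open>i < N\<close> by simp
  qed (use \<open>N \<ge> 1\<close> \<open>y 0 = b\<close> \<open>y N = a\<close> \<open>\<forall>i\<le>N. y i \<in> A\<close> in auto)
qed

text \<open>\<open>concat_pos N n = (k, j)\<close>: the \<open>n\<close>-th term of a concatenation of chains of lengths
  \<open>N 0, N 1, \<dots>\<close> is the \<open>j\<close>-th point of the \<open>k\<close>-th chain (whose last point is skipped, being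
  the first point of the next chain).\<close>

definition concat_pos :: "(nat \<Rightarrow> nat) \<Rightarrow> nat \<Rightarrow> nat \<times> nat" where
  "concat_pos N n = ((\<lambda>(k, j). if Suc j < N k then (k, Suc j) else (Suc k, 0)) ^^ n) (0, 0)"

lemma concat_pos_0 [simp]: "concat_pos N 0 = (0, 0)"
  by (simp add: concat_pos_def)

lemma concat_pos_Suc:
  "concat_pos N (Suc n) = (case concat_pos N n of (k, j) \<Rightarrow> if Suc j < N k then (k, Suc j) else (Suc k, 0))"
  by (simp add: concat_pos_def)

lemma concat_pos_less:
  assumes "\<And>k. N k \<ge> 1"
  shows "snd (concat_pos N n) < N (fst (concat_pos N n))"
proof (induction n)
  case 0
  then show ?case
    using assms[of 0] by simp
next
  case (Suc n)
  then show ?case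
    using assms by (cases "concat_pos N n") (auto simp: concat_pos_Suc Suc_le_eq)
qed

lemma concat_pos_mono:
  assumes "m \<le> n"
  shows "fst (concat_pos N m) \<le> fst (concat_pos N n)"
  using assms
proof (induction n rule: dec_induct)
  case (step n)
  then show ?case
    by (cases "concat_pos N n") (auto simp: concat_pos_Suc)
qed simp

lemma concat_pos_block_start:
  assumes "\<And>k. N k \<ge> 1"
  shows "\<exists>n\<ge>k. concat_pos N n = (k, 0)"
proof (induction k)
  case 0
  then show ?case
    by (intro exI[of _ 0]) simp
next
  case (Suc k)
  then obtain n where "n \<ge> k" "concat_pos N n = (k, 0)"
    by blast
  have within_block: "concat_pos N (n + j) = (k, j)" if "j < N k" for j
    using that by (induction j) (auto simp: \<open>concat_pos N n = (k, 0)\<close> concat_pos_Suc)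
  obtain j where "N k = Suc j"
    using assms[of k] by (metis Suc_le_D One_nat_def)
  then have "concat_pos N (Suc (n + j)) = (Suc k, 0)"
    using within_block[of j] by (simp add: concat_pos_Suc)
  then show ?case
    using \<open>n \<ge> k\<close> by (intro exI[of _ "Suc (n + j)"]) auto
qed

definition concat_seq :: "(nat \<Rightarrow> nat \<Rightarrow> 'a) \<Rightarrow> (nat \<Rightarrow> nat) \<Rightarrow> nat \<Rightarrow> 'a" where
  "concat_seq c N n = (case concat_pos N n of (k, j) \<Rightarrow> c k j)"

lemma concat_seq_Suc:
  assumes "concat_pos N n = (k, j)" "j < N k" "c k (N k) = c (Suc k) 0"
  shows "concat_seq c N (Suc n) = c k (Suc j)"
proof (cases "Suc j < N k")
  case True
  then show ?thesis
    using assms(1) by (simp add: concat_seq_def concat_pos_Suc)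
next
  case False
  then have "Suc j = N k"
    using assms(2) by simp
  then show ?thesis
    using assms(1,3) False by (simp add: concat_seq_def concat_pos_Suc)
qed

lemma concat_delta_chains:
  fixes E :: "'a \<Rightarrow> 'a \<Rightarrow> real"
  assumes "\<And>u v. E u v \<ge> 0" "\<delta> \<longlonglongrightarrow> 0" "\<And>k. delta_chain E A (\<delta> k) (e k) (e (Suc k))"
  obtains p where "\<And>n. p n \<in> A" "(\<lambda>n. E (p n) (p (Suc n))) \<longlonglongrightarrow> 0" "\<And>k. \<exists>n\<ge>k. p n = e k"
proof -
  obtain N c where N: "\<And>k. N k \<ge> 1" and c0: "\<And>k. c k 0 = e k" and cN: "\<And>k. c k (N k) = e (Suc k)"
    and cA: "\<And>k i. i \<le> N k \<Longrightarrow> c k i \<in> A" and cE: "\<And>k i. i < N k \<Longrightarrow> E (c k i) (c k (Suc i)) < \<delta> k"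
    using assms(3) unfolding delta_chain_def by metis
  let ?p = "concat_seq c N"
  have step: "E (?p n) (?p (Suc n)) < \<delta> (fst (concat_pos N n))" for n
  proof (cases "concat_pos N n")
    case (Pair k j)
    then have "j < N k"
      using concat_pos_less[of N n, OF N] by simp
    moreover have "c k (N k) = c (Suc k) 0"
      using cN c0 by simp
    ultimately have "?p (Suc n) = c k (Suc j)"
      by (rule concat_seq_Suc[OF Pair])
    moreover have "?p n = c k j"
      using Pair by (simp add: concat_seq_def)
    ultimately show ?thesis
      using Pair cE[OF \<open>j < N k\<close>] by simp
  qed
  show ?thesis
  proof
    show "?p n \<in> A" for n
      using cA concat_pos_less[of N n, OF N] by (cases "concat_pos N n") (simp add: concat_seq_def)
    show "\<exists>n\<ge>k. ?p n = e k" for k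
      using concat_pos_block_start[of N k, OF N] c0 by (auto simp: concat_seq_def)
    show "(\<lambda>n. E (?p n) (?p (Suc n))) \<longlonglongrightarrow> 0"
    proof (rule order_tendstoI)
      fix \<epsilon> :: real
      assume "\<epsilon> > 0"
      then obtain K where K: "\<And>k. k \<ge> K \<Longrightarrow> \<delta> k < \<epsilon>"
        using order_tendstoD(2)[OF assms(2)] unfolding eventually_sequentially by blast
      obtain n0 where "concat_pos N n0 = (K, 0)"
        using concat_pos_block_start[of N, OF N] by blast
      then have "\<delta> (fst (concat_pos N n)) < \<epsilon>" if "n \<ge> n0" for n
        using concat_pos_mono[OF that, of N] K by simp
      then show "eventually (\<lambda>n. E (?p n) (?p (Suc n)) < \<epsilon>) sequentially"
        unfolding eventually_sequentially using step less_trans by blast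
    next
      fix a :: real
      assume "a < 0"
      then show "eventually (\<lambda>n. a < E (?p n) (?p (Suc n))) sequentially"
        using assms(1) by (intro always_eventually allI) (meson less_le_trans)
    qed
  qed
qed

lemma compact_dense_sequence:
  fixes A :: "'a::metric_space set"
  assumes "compact A" "A \<noteq> {}"
  obtains e :: "nat \<Rightarrow> 'a" where "\<And>k. e k \<in> A" and "\<And>b \<epsilon> M. b \<in> A \<Longrightarrow> \<epsilon> > 0 \<Longrightarrow> \<exists>k\<ge>M. dist (e k) b < \<epsilon>"
proof -
  have "\<exists>F. finite F \<and> F \<subseteq> A \<and> A \<subseteq> (\<Union>c\<in>F. ball c (inverse (real (Suc m))))" for m
    using seq_compact_imp_totally_bounded[OF compact_imp_seq_compact[OF assms(1)]] by simp
  then obtain F where F: "\<And>m. finite (F m)" "\<And>m. F m \<subseteq> A"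
    and F_net: "\<And>m. A \<subseteq> (\<Union>c\<in>F m. ball c (inverse (real (Suc m))))"
    by metis
  define D where "D = (\<Union>m. F m)"
  have "countable D"
    unfolding D_def using F(1) by (intro countable_UN) (auto intro: countable_finite)
  have "D \<subseteq> A"
    using F(2) by (auto simp: D_def)
  define e where "e k = from_nat_into D (fst (prod_decode k))" for k
  show ?thesis
  proof
    have "D \<noteq> {}"
      using F_net[of 0] assms(2) by (auto simp: D_def)
    then show "e k \<in> A" for k
      using from_nat_into \<open>D \<subseteq> A\<close> unfolding e_def by blast
  next
    fix b :: 'a and \<epsilon> :: real and M :: nat
    assume "b \<in> A" "\<epsilon> > 0"
    then obtain m where "inverse (real (Suc m)) < \<epsilon>"
      using reals_Archimedean by blast
    moreover obtain c where "c \<in> F m" "dist c b < inverse (real (Suc m))"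
      using F_net \<open>b \<in> A\<close> by fastforce
    moreover obtain j where "from_nat_into D j = c"
      using from_nat_into_surj[OF \<open>countable D\<close>, of c] \<open>c \<in> F m\<close> by (auto simp: D_def)
    ultimately have "e (prod_encode (j, M)) = c" "dist c b < \<epsilon>"
      by (auto simp: e_def)
    then show "\<exists>k\<ge>M. dist (e k) b < \<epsilon>"
      using le_prod_encode_2 by metis
  qed
qed

lemma dense_delta_chain_sequence:
  fixes E :: "'a::metric_space \<Rightarrow> 'a \<Rightarrow> real"
  assumes "compact A" "A \<noteq> {}" "\<And>u v. E u v \<ge> 0"
    and "\<forall>a\<in>A. \<forall>b\<in>A. \<forall>\<delta>>0. delta_chain E A \<delta> a b"
  obtains p where "\<And>n. p n \<in> A" "(\<lambda>n. E (p n) (p (Suc n))) \<longlonglongrightarrow> 0"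
    and "\<And>b \<epsilon> M. b \<in> A \<Longrightarrow> \<epsilon> > 0 \<Longrightarrow> \<exists>n\<ge>M. dist (p n) b < \<epsilon>"
proof -
  obtain e :: "nat \<Rightarrow> 'a" where e_A: "\<And>k. e k \<in> A"
    and e_dense: "\<And>b \<epsilon> M. b \<in> A \<Longrightarrow> \<epsilon> > 0 \<Longrightarrow> \<exists>k\<ge>M. dist (e k) b < \<epsilon>"
    by (erule compact_dense_sequence[OF assms(1,2)])
  have "delta_chain E A (inverse (real (Suc k))) (e k) (e (Suc k))" for k
    using assms(4) e_A by simp
  then obtain p where "\<And>n. p n \<in> A" "(\<lambda>n. E (p n) (p (Suc n))) \<longlonglongrightarrow> 0"
    and p_e: "\<And>k. \<exists>n\<ge>k. p n = e k"
    by (erule concat_delta_chains[OF assms(3) LIMSEQ_inverse_real_of_nat])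
  moreover have "\<exists>n\<ge>M. dist (p n) b < \<epsilon>" if b: "b \<in> A" and \<epsilon>: "\<epsilon> > 0" for b \<epsilon> M
  proof -
    obtain k where "k \<ge> M" "dist (e k) b < \<epsilon>"
      using e_dense[OF b \<epsilon>] by blast
    moreover obtain n where "n \<ge> k" "p n = e k"
      using p_e by blast
    ultimately show ?thesis
      by (intro exI[of _ n]) auto
  qed
  ultimately show ?thesis
    using that by blast
qed

definition join_seqs :: "(nat \<Rightarrow> 'a) \<Rightarrow> (nat \<Rightarrow> 'a) \<Rightarrow> int \<Rightarrow> 'a" where
  "join_seqs p q i = (if 0 \<le> i then p (nat i) else q (nat (- i - 1)))"

lemma join_seqs_nonneg [simp]: "join_seqs p q (int n) = p n"
  by (simp add: join_seqs_def)

lemma join_seqs_neg [simp]: "join_seqs p q (- int n - 1) = q n"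
  by (simp add: join_seqs_def)

lemma omega_set_join_seqs:
  assumes "closed A" "\<And>n. p n \<in> A" "\<And>n. q n \<in> A"
    and "\<And>b \<epsilon> M. b \<in> A \<Longrightarrow> \<epsilon> > 0 \<Longrightarrow> \<exists>n\<ge>M. dist (p n) b < \<epsilon>"
  shows "omega_set (join_seqs p q) = A"
proof (rule omega_set_eqI[OF assms(1)])
  show "join_seqs p q i \<in> A" for i
    using assms(2,3) by (simp add: join_seqs_def)
  fix b and \<epsilon> :: real and M :: int
  assume "b \<in> A" "\<epsilon> > 0"
  then obtain n where "n \<ge> nat M + 1" "dist (p n) b < \<epsilon>"
    using assms(4) by blast
  then show "\<exists>i>M. dist (join_seqs p q i) b < \<epsilon>"
    by (intro exI[of _ "int n"]) auto
qed

lemma alpha_set_join_seqs: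
  assumes "closed A" "\<And>n. p n \<in> A" "\<And>n. q n \<in> A"
    and "\<And>b \<epsilon> M. b \<in> A \<Longrightarrow> \<epsilon> > 0 \<Longrightarrow> \<exists>n\<ge>M. dist (q n) b < \<epsilon>"
  shows "alpha_set (join_seqs p q) = A"
  unfolding alpha_set_eq_omega_set_reflect
proof (rule omega_set_eqI[OF assms(1)])
  show "join_seqs p q (- i) \<in> A" for i
    using assms(2,3) by (simp add: join_seqs_def)
  fix b and \<epsilon> :: real and M :: int
  assume "b \<in> A" "\<epsilon> > 0"
  then obtain n where "n \<ge> nat M" "dist (q n) b < \<epsilon>"
    using assms(4) by blast
  moreover have "- (int n + 1) = - int n - 1"
    by simp
  ultimately show "\<exists>i>M. dist (join_seqs p q (- i)) b < \<epsilon>"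
    by (intro exI[of _ "int n + 1"]) auto
qed

lemma join_seqs_pseudo_orbit_at_top:
  assumes "(\<lambda>n. dist (f (p n)) (p (Suc n))) \<longlonglongrightarrow> 0"
  shows "((\<lambda>i. dist (f (join_seqs p q i)) (join_seqs p q (i + 1))) \<longlongrightarrow> 0) at_top"
proof (rule tendstoI)
  fix \<epsilon> :: real
  assume "\<epsilon> > 0"
  then obtain n0 where n0: "\<And>n. n \<ge> n0 \<Longrightarrow> dist (f (p n)) (p (Suc n)) < \<epsilon>"
    using order_tendstoD(2)[OF assms] unfolding eventually_sequentially by blast
  have "dist (f (join_seqs p q i)) (join_seqs p q (i + 1)) < \<epsilon>" if "i \<ge> int n0" for i
  proof -
    have "join_seqs p q i = p (nat i)" "join_seqs p q (i + 1) = p (Suc (nat i))"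
      using that by (auto simp: join_seqs_def Suc_nat_eq_nat_zadd1 add.commute)
    then show ?thesis
      using n0[of "nat i"] that by simp
  qed
  then show "eventually (\<lambda>i. dist (dist (f (join_seqs p q i)) (join_seqs p q (i + 1))) 0 < \<epsilon>) at_top"
    unfolding eventually_at_top_linorder by auto
qed

lemma join_seqs_pseudo_orbit_at_bot:
  assumes "(\<lambda>n. dist (f (q (Suc n))) (q n)) \<longlonglongrightarrow> 0"
  shows "((\<lambda>i. dist (f (join_seqs p q i)) (join_seqs p q (i + 1))) \<longlongrightarrow> 0) at_bot"
proof (rule tendstoI)
  fix \<epsilon> :: real
  assume "\<epsilon> > 0"
  then obtain n0 where n0: "\<And>n. n \<ge> n0 \<Longrightarrow> dist (f (q (Suc n))) (q n) < \<epsilon>"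
    using order_tendstoD(2)[OF assms] unfolding eventually_sequentially by blast
  have "dist (f (join_seqs p q i)) (join_seqs p q (i + 1)) < \<epsilon>" if "i \<le> - int n0 - 2" for i
  proof -
    have "nat (- i - 1) = Suc (nat (- i - 2))" "nat (- (i + 1) - 1) = nat (- i - 2)"
      using that by arith+
    then have "join_seqs p q i = q (Suc (nat (- i - 2)))" "join_seqs p q (i + 1) = q (nat (- i - 2))"
      using that by (simp_all add: join_seqs_def)
    then show ?thesis
      using n0[of "nat (- i - 2)"] that by simp
  qed
  then show "eventually (\<lambda>i. dist (dist (f (join_seqs p q i)) (join_seqs p q (i + 1))) 0 < \<epsilon>) at_bot"
    unfolding eventually_at_bot_linorder by auto
qed

lemma ICT_imp_two_sided_pseudo_orbit:
  assumes "compact S" "A \<in> ICT S f"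
  obtains x where "two_sided_asymptotic_pseudo_orbit S f x" "alpha_set x = A" "omega_set x = A"
proof -
  have "A \<subseteq> S" "A \<noteq> {}" "closed A" and ict: "internally_chain_transitive f A"
    using assms(2) by (auto simp: ICT_def)
  have "compact A"
    using compact_Int_closed[OF assms(1) \<open>closed A\<close>] \<open>A \<subseteq> S\<close> by (simp add: Int_absorb1)
  obtain p where p_A: "\<And>n. p n \<in> A" and p_orbit: "(\<lambda>n. dist (f (p n)) (p (Suc n))) \<longlonglongrightarrow> 0"
    and p_dense: "\<And>b \<epsilon> M. b \<in> A \<Longrightarrow> \<epsilon> > 0 \<Longrightarrow> \<exists>n\<ge>M. dist (p n) b < \<epsilon>"
    by (erule dense_delta_chain_sequence[where E = "\<lambda>u v. dist (f u) v", OF \<open>compact A\<close> \<open>A \<noteq> {}\<close> zero_le_dist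
        ict[unfolded internally_chain_transitive_iff_delta_chain]])
  obtain q where q_A: "\<And>n. q n \<in> A" and q_orbit: "(\<lambda>n. dist (f (q (Suc n))) (q n)) \<longlonglongrightarrow> 0"
    and q_dense: "\<And>b \<epsilon> M. b \<in> A \<Longrightarrow> \<epsilon> > 0 \<Longrightarrow> \<exists>n\<ge>M. dist (q n) b < \<epsilon>"
    by (erule dense_delta_chain_sequence[where E = "\<lambda>u v. dist (f v) u", OF \<open>compact A\<close> \<open>A \<noteq> {}\<close> zero_le_dist
        internally_chain_transitive_reverse_delta_chain[OF ict]])
  have "two_sided_asymptotic_pseudo_orbit S f (join_seqs p q)"
    unfolding two_sided_asymptotic_pseudo_orbit_def
    using p_A q_A \<open>A \<subseteq> S\<close> join_seqs_pseudo_orbit_at_top[OF p_orbit] join_seqs_pseudo_orbit_at_bot[OF q_orbit]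
    by (auto simp: join_seqs_def)
  moreover have "alpha_set (join_seqs p q) = A" "omega_set (join_seqs p q) = A"
    using alpha_set_join_seqs[OF \<open>closed A\<close> p_A q_A q_dense] omega_set_join_seqs[OF \<open>closed A\<close> p_A q_A p_dense]
    by auto
  ultimately show ?thesis
    using that by blast
qed

lemma shadowing_imp_property_Pe:
  assumes "compact S" "gamma_restricted_two_sided_orbital_limit_shadowing S f"
  shows "property_Pe S f"
  unfolding property_Pe_def
proof
  fix A
  assume "A \<in> ICT S f"
  then obtain x where "two_sided_asymptotic_pseudo_orbit S f x" "alpha_set x = A" "omega_set x = A"
    using assms(1) ICT_imp_two_sided_pseudo_orbit by blast
  then show "\<exists>z. full_trajectory S f z \<and> alpha_set z = A \<and> omega_set z = A"
    using assms(2) unfolding gamma_restricted_two_sided_orbital_limit_shadowing_def by metis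
qed

theorem mainTheorem1:
  fixes S :: "'a::metric_space set" and f :: "'a \<Rightarrow> 'a"
  assumes "compact S" and "continuous_on S f" and "f ` S \<subseteq> S"
  shows "property_Pe S f \<longleftrightarrow> gamma_restricted_two_sided_orbital_limit_shadowing S f"
  using property_Pe_imp_shadowing[OF assms(1,2)] shadowing_imp_property_Pe[OF assms(1)] by blast

end
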